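(* Let $P_{II*}=P_{II}$. For a filter $\Xi\in P_{III*}$, $\mathcal C_{\Xi\text{-unc}}\neq\emptyset$ if and only if there exists a partition $\xi\in P_I$ such that $\Xi=\uparrow\{\downarrow\{\xi\}\}$, i.e. $\Xi=\{\boldsymbol\xi\in P_{II}:\xi\in\boldsymbol\xi\}$, where $\downarrow\{\xi\}=\{\upsilon\in P_I:\upsilon\preceq\xi\}$ and $\uparrow\{\boldsymbol\zeta\}=\{\boldsymbol\upsilon\in P_{II}:\boldsymbol\zeta\subseteq\boldsymbol\upsilon\}$.
   Context: Let $n\ge1$, $L=\{1,\dots,n\}$, and for $i\in L$ let $\mathcal H_i$ be a Hilbert space with $1<\dim\mathcal H_i<\infty$; $\mathcal H_X=\bigotimes_{i\in X}\mathcal H_i$ and $\mathcal D_X$ is the set of density operators on $\mathcal H_X$. $P_I$ is the set of partitions of $L$ ordered by refinement ($\upsilon\preceq\xi$ iff every part of $\upsilon$ lies in a part of $\xi$). For $\xi\in P_I$, $\mathcal D_{\xi\text{-unc}}=\{\varrho\in\mathcal D_L:\varrho=\bigotimes_{X\in\xi}\varrho_X,\ \varrho_X\in\mathcal D_X\}$, and for $S\subseteq P_I$, $\mathcal D_{S\text{-unc}}=\bigcup_{\xi\in S}\mathcal D_{\xi\text{-unc}}$. $P_{II}$ is the set of nonempty down-sets of $P_I$, ordered by inclusion; $P_{III*}$ is the set of nonempty up-sets of $P_{II*}$. For $\Xi\in P_{III*}$: $\overline\Xi=P_{II*}\setminus\Xi$ and $\mathcal C_{\Xi\text{-unc}}=\bigcap_{\boldsymbol\xi'\in\overline\Xi}(\mathcal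 D_L\setminus\mathcal D_{\boldsymbol\xi'\text{-unc}})\cap\bigcap_{\boldsymbol\xi\in\Xi}\mathcal D_{\boldsymbol\xi\text{-unc}}$. *)

theory Defs
  imports Complex_Main "HOL-Library.Disjoint_Sets"
begin

text \<open>Each \<open>H_i\<close> is modelled as \<open>C^(d i)\<close> with a fixed orthonormal basis.
 A basis vector of \<open>H_X\<close> is a multi-index \<open>f\<close> with \<open>f i < d i\<close> for \<open>i \<in> X\<close>
 and \<open>f i = 0\<close> outside \<open>X\<close>. Operators on \<open>H_X\<close> are matrices indexed by such
 multi-indices (entries outside the index set are required to be 0).\<close>

definition configs :: "(nat \<Rightarrow> nat) \<Rightarrow> nat set \<Rightarrow> (nat \<Rightarrow> nat) set" where
  "configs d X = {f. (\<forall>i\<in>X. f i < d i) \<and> (\<forall>i. i \<notin> X \<longrightarrow> f i = 0)}"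

type_synonym op = "(nat \<Rightarrow> nat) \<Rightarrow> (nat \<Rightarrow> nat) \<Rightarrow> complex"

definition is_density :: "(nat \<Rightarrow> nat) \<Rightarrow> nat set \<Rightarrow> op \<Rightarrow> bool" where
  "is_density d X \<rho> \<longleftrightarrow>
     (\<forall>f g. (f \<notin> configs d X \<or> g \<notin> configs d X) \<longrightarrow> \<rho> f g = 0) \<and>
     (\<forall>f g. \<rho> f g = cnj (\<rho> g f)) \<and>
     (\<forall>v :: (nat \<Rightarrow> nat) \<Rightarrow> complex.
        let q = (\<Sum>f\<in>configs d X. \<Sum>g\<in>configs d X. cnj (v f) * \<rho> f g * v g)
        in Im q = 0 \<and> 0 \<le> Re q) \<and>
     (\<Sum>f\<in>configs d X. \<rho> f f) = 1"

definition dens :: "(nat \<Rightarrow> nat) \<Rightarrow> nat set \<Rightarrow> op set" where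
  "dens d X = {\<rho>. is_density d X \<rho>}"

definition restr :: "(nat \<Rightarrow> nat) \<Rightarrow> nat set \<Rightarrow> (nat \<Rightarrow> nat)" where
  "restr f X = (\<lambda>i. if i \<in> X then f i else 0)"

definition tensor :: "(nat \<Rightarrow> nat) \<Rightarrow> nat set \<Rightarrow> nat set set \<Rightarrow> (nat set \<Rightarrow> op) \<Rightarrow> op" where
  "tensor d L \<xi> \<rho>s = (\<lambda>f g. if f \<in> configs d L \<and> g \<in> configs d L
      then (\<Prod>X\<in>\<xi>. \<rho>s X (restr f X) (restr g X)) else 0)"

definition unc :: "(nat \<Rightarrow> nat) \<Rightarrow> nat set \<Rightarrow> nat set set \<Rightarrow> op set" where
  "unc d L \<xi> = {\<rho> \<in> dens d L. \<exists>\<rho>s. (\<forall>X\<in>\<xi>. \<rho>s X \<in> dens d X) \<and> \<rho> = tensor d L \<xi> \<rho>s}"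

definition uncS :: "(nat \<Rightarrow> nat) \<Rightarrow> nat set \<Rightarrow> nat set set set \<Rightarrow> op set" where
  "uncS d L S = (\<Union>\<xi>\<in>S. unc d L \<xi>)"

definition PI :: "nat set \<Rightarrow> nat set set set" where
  "PI L = {\<xi>. partition_on L \<xi>}"

definition refines :: "nat set set \<Rightarrow> nat set set \<Rightarrow> bool" where
  "refines \<upsilon> \<xi> \<longleftrightarrow> (\<forall>Y\<in>\<upsilon>. \<exists>X\<in>\<xi>. Y \<subseteq> X)"

definition PII :: "nat set \<Rightarrow> nat set set set set" where
  "PII L = {S. S \<subseteq> PI L \<and> S \<noteq> {} \<and> (\<forall>\<xi>\<in>S. \<forall>\<upsilon>\<in>PI L. refines \<upsilon> \<xi> \<longrightarrow> \<upsilon> \<in> S)}"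

definition PIII :: "nat set \<Rightarrow> nat set set set set set" where
  "PIII L = {\<Xi>. \<Xi> \<subseteq> PII L \<and> \<Xi> \<noteq> {} \<and> (\<forall>a\<in>\<Xi>. \<forall>b\<in>PII L. a \<subseteq> b \<longrightarrow> b \<in> \<Xi>)}"

definition Cunc :: "(nat \<Rightarrow> nat) \<Rightarrow> nat set \<Rightarrow> nat set set set set \<Rightarrow> op set" where
  "Cunc d L \<Xi> = (\<Inter>\<xi>'\<in>PII L - \<Xi>. dens d L - uncS d L \<xi>') \<inter> (\<Inter>\<xi>\<in>\<Xi>. uncS d L \<xi>)"

definition downset :: "nat set \<Rightarrow> nat set set \<Rightarrow> nat set set set" where
  "downset L \<xi> = {\<upsilon> \<in> PI L. refines \<upsilon> \<xi>}"

definition upset :: "nat set \<Rightarrow> nat set set set \<Rightarrow> nat set set set set" where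
  "upset L Z = {U \<in> PII L. Z \<subseteq> U}"

end

theory Submission
  imports Defs
begin

text \<open>If a state \<open>\<rho>\<close> is a product along two partitions, it is a product along their meet:
  both factorizations express the entries of \<open>\<rho>\<close> through its slices at a basis vector \<open>c\<close> with
  \<open>\<rho> c c \<noteq> 0\<close>, and such a slice factorization already forces \<open>\<rho>\<close> to be the product of its
  normalized slices. Hence every state has a finest partition \<open>m\<close> along which it is a product,
  it is \<open>S\<close>-uncorrelated for a down-set \<open>S\<close> exactly when \<open>m \<in> S\<close>, and so the only filter \<open>\<Xi>\<close>
  with \<open>\<rho> \<in> C\<^sub>\<Xi>\<close> is \<open>\<up>{\<down>{m}}\<close>. Conversely, for a partition \<open>\<xi>\<close> the product of GHZ states
  on the blocks of \<open>\<xi>\<close> is a product exactly along the coarsenings of \<open>\<xi>\<close>, so it lies in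
  \<open>C\<^sub>\<Xi>\<close> for \<open>\<Xi> = \<up>{\<down>{\<xi>}}\<close>.\<close>

section \<open>Basis configurations\<close>

lemma finite_configs: "finite X \<Longrightarrow> finite (configs d X)"
proof (induction X rule: finite_induct)
  case empty
  have "configs d {} = {\<lambda>i. 0}" by (auto simp: configs_def)
  then show ?case by simp
next
  case (insert x X)
  have "configs d (insert x X) \<subseteq> (\<lambda>(f, v). f(x := v)) ` (configs d X \<times> {..<d x})"
  proof
    fix f assume f: "f \<in> configs d (insert x X)"
    have "(f(x := 0), f x) \<in> configs d X \<times> {..<d x}"
      using f insert.hyps by (auto simp: configs_def)
    moreover have "f = (\<lambda>(f, v). f(x := v)) (f(x := 0), f x)" by auto
    ultimately show "f \<in> (\<lambda>(f, v). f(x := v)) ` (configs d X \<times> {..<d x})" by blast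
  qed
  then show ?case using insert.IH finite_subset by blast
qed

lemma restr_in_configs: "f \<in> configs d L \<Longrightarrow> Z \<subseteq> L \<Longrightarrow> restr f Z \<in> configs d Z"
  by (auto simp: configs_def restr_def)

lemma override_on_in_configs:
  "c \<in> configs d L \<Longrightarrow> f \<in> configs d L \<Longrightarrow> override_on c f A \<in> configs d L"
  by (auto simp: configs_def override_on_def)

lemma override_on_in_configs_subset:
  "c \<in> configs d L \<Longrightarrow> h \<in> configs d Z \<Longrightarrow> Z \<subseteq> L \<Longrightarrow> override_on c h Z \<in> configs d L"
  by (auto simp: configs_def override_on_def)

lemma override_on_configs_eq:
  "c \<in> configs d L \<Longrightarrow> f \<in> configs d L \<Longrightarrow> override_on c f L = f"
  by (auto simp: configs_def override_on_def)

lemma restr_override_on_in_configs: "h \<in> configs d Z \<Longrightarrow> restr (override_on c h Z) Z = h"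
  by (auto simp: configs_def override_on_def restr_def)

lemma override_on_restr: "override_on c (restr f Z) Z = override_on c f Z"
  by (auto simp: override_on_def restr_def fun_eq_iff)

lemma restr_override_on_disjoint: "Y \<inter> Z = {} \<Longrightarrow> restr (override_on c f Z) Y = restr c Y"
  by (auto simp: override_on_def restr_def fun_eq_iff)

lemma restr_override_on_subset: "Y \<subseteq> Z \<Longrightarrow> restr (override_on c f Z) Y = restr f Y"
  by (auto simp: override_on_def restr_def fun_eq_iff)

lemma bij_betw_configs_Un:
  assumes "X \<inter> M = {}"
  shows "bij_betw (\<lambda>(h, k). override_on k h X) (configs d X \<times> configs d M) (configs d (X \<union> M))"
proof (rule bij_betw_imageI)
  show "inj_on (\<lambda>(h, k). override_on k h X) (configs d X \<times> configs d M)"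
  proof (rule inj_onI, clarify)
    fix h k h' k'
    assume in_configs: "h \<in> configs d X" "k \<in> configs d M" "h' \<in> configs d X" "k' \<in> configs d M"
      and eq: "override_on k h X = override_on k' h' X"
    have "h = h'"
      using arg_cong[OF eq, of "\<lambda>f. restr f X"] in_configs by (simp add: restr_override_on_in_configs)
    moreover have "restr k M = restr k' M"
      using arg_cong[OF eq, of "\<lambda>f. restr f M"] assms by (simp add: restr_override_on_disjoint Int_commute)
    moreover have "restr k M = k" "restr k' M = k'"
      using in_configs by (auto simp: restr_def configs_def)
    ultimately show "h = h' \<and> k = k'" by simp
  qed
  show "(\<lambda>(h, k). override_on k h X) ` (configs d X \<times> configs d M) = configs d (X \<union> M)"
  proof
    show "(\<lambda>(h, k). override_on k h X) ` (configs d X \<times> configs d M) \<subseteq> configs d (X \<union> M)"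
      by (auto simp: configs_def override_on_def)
    show "configs d (X \<union> M) \<subseteq> (\<lambda>(h, k). override_on k h X) ` (configs d X \<times> configs d M)"
    proof
      fix f assume f: "f \<in> configs d (X \<union> M)"
      have "f = (\<lambda>(h, k). override_on k h X) (restr f X, restr f M)"
        using f assms by (auto simp: override_on_def restr_def configs_def)
      moreover have "(restr f X, restr f M) \<in> configs d X \<times> configs d M"
        using f by (auto intro: restr_in_configs)
      ultimately show "f \<in> (\<lambda>(h, k). override_on k h X) ` (configs d X \<times> configs d M)" by blast
    qed
  qed
qed

lemma sum_configs_Union_prod:
  fixes F :: "nat set \<Rightarrow> (nat \<Rightarrow> nat) \<Rightarrow> 'a::comm_semiring_1"
  assumes "finite Q" "disjoint Q"
  shows "(\<Sum>f\<in>configs d (\<Union>Q). \<Prod>Z\<in>Q. F Z (restr f Z)) = (\<Prod>Z\<in>Q. \<Sum>h\<in>configs d Z. F Z h)"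
  using assms
proof (induction Q rule: finite_induct)
  case empty
  have "configs d {} = {\<lambda>i. 0}" by (auto simp: configs_def)
  then show ?case by simp
next
  case (insert X Q)
  define M where "M = \<Union>Q"
  have disj: "X \<inter> M = {}"
    using insert.prems insert.hyps(2) unfolding M_def by (auto dest: disjointD)
  have IH: "(\<Sum>k\<in>configs d M. \<Prod>Z\<in>Q. F Z (restr k Z)) = (\<Prod>Z\<in>Q. \<Sum>h\<in>configs d Z. F Z h)"
    using insert.IH insert.prems unfolding M_def by (simp add: disjoint_def)
  have restr_Q: "restr (override_on k h X) Z = restr k Z" if "Z \<in> Q" for h k Z
    using disj that unfolding M_def by (intro restr_override_on_disjoint) blast
  have "(\<Sum>f\<in>configs d (X \<union> M). \<Prod>Z\<in>insert X Q. F Z (restr f Z))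
      = (\<Sum>(h, k)\<in>configs d X \<times> configs d M. \<Prod>Z\<in>insert X Q. F Z (restr (override_on k h X) Z))"
    by (simp add: sum.reindex_bij_betw[OF bij_betw_configs_Un[OF disj], symmetric] case_prod_unfold)
  also have "\<dots> = (\<Sum>(h, k)\<in>configs d X \<times> configs d M. F X h * (\<Prod>Z\<in>Q. F Z (restr k Z)))"
    using insert.hyps restr_Q by (intro sum.cong refl) (auto simp: restr_override_on_in_configs)
  also have "\<dots> = (\<Sum>h\<in>configs d X. F X h) * (\<Sum>k\<in>configs d M. \<Prod>Z\<in>Q. F Z (restr k Z))"
    by (simp add: sum.cartesian_product[symmetric] sum_product)
  finally show ?case using insert.hyps IH by (simp add: M_def)
qed

section \<open>Density operators and their slices\<close>

definition quad_form :: "(nat \<Rightarrow> nat) \<Rightarrow> nat set \<Rightarrow> op \<Rightarrow> ((nat \<Rightarrow> nat) \<Rightarrow> complex) \<Rightarrow> complex" where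
  "quad_form d X \<rho> v = (\<Sum>f\<in>configs d X. \<Sum>g\<in>configs d X. cnj (v f) * \<rho> f g * v g)"

definition trace :: "(nat \<Rightarrow> nat) \<Rightarrow> nat set \<Rightarrow> op \<Rightarrow> complex" where
  "trace d X \<rho> = (\<Sum>f\<in>configs d X. \<rho> f f)"

lemma densD:
  assumes "\<rho> \<in> dens d X"
  shows "\<And>f g. f \<notin> configs d X \<or> g \<notin> configs d X \<Longrightarrow> \<rho> f g = 0"
    and "\<And>f g. \<rho> f g = cnj (\<rho> g f)"
    and "\<And>v. Im (quad_form d X \<rho> v) = 0"
    and "\<And>v. 0 \<le> Re (quad_form d X \<rho> v)"
    and "trace d X \<rho> = 1"
  using assms unfolding dens_def is_density_def quad_form_def trace_def Let_def by blast+

lemma densI: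
  assumes "\<And>f g. f \<notin> configs d X \<or> g \<notin> configs d X \<Longrightarrow> \<rho> f g = 0"
    and "\<And>f g. \<rho> f g = cnj (\<rho> g f)"
    and "\<And>v. Im (quad_form d X \<rho> v) = 0"
    and "\<And>v. 0 \<le> Re (quad_form d X \<rho> v)"
    and "trace d X \<rho> = 1"
  shows "\<rho> \<in> dens d X"
  using assms unfolding dens_def is_density_def quad_form_def trace_def Let_def by blast

lemma dens_diag_nonneg:
  assumes "\<rho> \<in> dens d X" "finite X"
  shows "Im (\<rho> f f) = 0 \<and> 0 \<le> Re (\<rho> f f)"
proof (cases "f \<in> configs d X")
  case False
  then show ?thesis using densD(1)[OF assms(1)] by auto
next
  case True
  define v :: "(nat \<Rightarrow> nat) \<Rightarrow> complex" where "v g = (if g = f then 1 else 0)" for g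
  have fin: "finite (configs d X)" using finite_configs[OF assms(2)] .
  have "quad_form d X \<rho> v = (\<Sum>a\<in>configs d X. \<Sum>b\<in>configs d X. if b = f then cnj (v a) * \<rho> a f else 0)"
    unfolding quad_form_def by (intro sum.cong refl) (auto simp: v_def)
  also have "\<dots> = (\<Sum>a\<in>configs d X. cnj (v a) * \<rho> a f)"
    using fin True by (simp add: sum.delta)
  also have "\<dots> = (\<Sum>a\<in>configs d X. if a = f then \<rho> f f else 0)"
    by (intro sum.cong refl) (auto simp: v_def)
  also have "\<dots> = \<rho> f f"
    using fin True by (simp add: sum.delta)
  finally have "quad_form d X \<rho> v = \<rho> f f" .
  then show ?thesis using densD(3,4)[OF assms(1), of v] by simp
qed

lemma dens_diag_nonzero:
  assumes "\<rho> \<in> dens d X"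
  obtains c where "c \<in> configs d X" "\<rho> c c \<noteq> 0"
proof -
  have "(\<Sum>f\<in>configs d X. \<rho> f f) \<noteq> 0"
    using densD(5)[OF assms] by (simp add: trace_def)
  then show thesis using that by (meson sum.neutral)
qed

lemma rank_one_in_dens:
  fixes u :: "(nat \<Rightarrow> nat) \<Rightarrow> real"
  assumes "\<And>f. f \<notin> configs d X \<Longrightarrow> u f = 0" "(\<Sum>f\<in>configs d X. (u f)\<^sup>2) = 1"
  shows "(\<lambda>f g. complex_of_real (u f * u g)) \<in> dens d X"
proof (rule densI)
  fix v :: "(nat \<Rightarrow> nat) \<Rightarrow> complex"
  define s where "s = (\<Sum>g\<in>configs d X. of_real (u g) * v g)"
  have "quad_form d X (\<lambda>f g. complex_of_real (u f * u g)) v = cnj s * s"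
    by (simp add: quad_form_def s_def sum_product sum_distrib_left mult_ac)
  also have "\<dots> = complex_of_real ((Re s)\<^sup>2 + (Im s)\<^sup>2)"
    using complex_mult_cnj[of s] by (simp add: mult.commute)
  finally have "quad_form d X (\<lambda>f g. complex_of_real (u f * u g)) v = of_real ((Re s)\<^sup>2 + (Im s)\<^sup>2)" .
  then show "Im (quad_form d X (\<lambda>f g. complex_of_real (u f * u g)) v) = 0"
    and "0 \<le> Re (quad_form d X (\<lambda>f g. complex_of_real (u f * u g)) v)"
    by simp_all
next
  have "trace d X (\<lambda>f g. complex_of_real (u f * u g)) = of_real (\<Sum>f\<in>configs d X. (u f)\<^sup>2)"
    unfolding trace_def of_real_sum power2_eq_square ..
  then show "trace d X (\<lambda>f g. complex_of_real (u f * u g)) = 1"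
    using assms(2) by simp
qed (use assms in \<open>auto simp: mult.commute\<close>)

text \<open>The compression of \<open>\<rho>\<close> to \<open>H_Z \<otimes> |c\<^sub>L\<^sub>-\<^sub>Z\<rangle>\<close>: the entries of \<open>\<rho>\<close> whose row and
  column indices agree with \<open>c\<close> outside \<open>Z\<close>.\<close>
definition slice :: "(nat \<Rightarrow> nat) \<Rightarrow> op \<Rightarrow> (nat \<Rightarrow> nat) \<Rightarrow> nat set \<Rightarrow> op" where
  "slice d \<rho> c Z = (\<lambda>h h'. if h \<in> configs d Z \<and> h' \<in> configs d Z
     then \<rho> (override_on c h Z) (override_on c h' Z) else 0)"

lemma quad_form_slice:
  assumes "finite L" "Z \<subseteq> L" "c \<in> configs d L"
  obtains w where "quad_form d Z (slice d \<rho> c Z) v = quad_form d L \<rho> w"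
proof
  let ?m = "\<lambda>h. override_on c h Z"
  let ?M = "?m ` configs d Z"
  define w where "w f = (if f \<in> ?M then v (restr f Z) else 0)" for f
  have fin: "finite (configs d L)" using finite_configs[OF assms(1)] .
  have M_sub: "?M \<subseteq> configs d L" using assms by (auto intro: override_on_in_configs_subset)
  have inj: "inj_on ?m (configs d Z)"
    by (rule inj_onI) (metis restr_override_on_in_configs)
  have "quad_form d L \<rho> w = (\<Sum>f\<in>?M. \<Sum>g\<in>?M. cnj (w f) * \<rho> f g * w g)"
    unfolding quad_form_def
    by (subst sum.mono_neutral_right[OF fin M_sub], simp add: w_def,
        intro sum.cong refl sum.mono_neutral_right[OF fin M_sub]) (auto simp: w_def)
  also have "\<dots> = quad_form d Z (slice d \<rho> c Z) v"
    by (simp add: quad_form_def slice_def sum.reindex[OF inj] w_def restr_override_on_in_configs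
        cong: sum.cong)
  finally show "quad_form d Z (slice d \<rho> c Z) v = quad_form d L \<rho> w" by simp
qed

text \<open>The hypothesis \<open>\<rho> c c \<noteq> 0\<close> is stated first so that, when these lemmas are
  instantiated with \<open>OF\<close>, it is resolved after \<open>\<rho>\<close> and \<open>c\<close> are fixed; otherwise unifying
  \<open>?\<rho> ?c ?c\<close> with the function-typed \<open>?c\<close> does not terminate.\<close>
lemma trace_slice_pos:
  assumes "\<rho> c c \<noteq> 0" "\<rho> \<in> dens d L" "finite L" "Z \<subseteq> L" "c \<in> configs d L"
  shows "Im (trace d Z (slice d \<rho> c Z)) = 0" "0 < Re (trace d Z (slice d \<rho> c Z))"
proof -
  have diag: "Im (\<rho> f f) = 0 \<and> 0 \<le> Re (\<rho> f f)" for f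
    using dens_diag_nonneg[OF assms(2,3)] by blast
  have trace_eq: "trace d Z (slice d \<rho> c Z) = (\<Sum>h\<in>configs d Z. \<rho> (override_on c h Z) (override_on c h Z))"
    by (simp add: trace_def slice_def)
  show "Im (trace d Z (slice d \<rho> c Z)) = 0"
    unfolding trace_eq using diag by (simp add: Im_sum)
  have "0 < Re (\<rho> c c)"
    using diag[of c] assms(1) by (metis complex_eqI less_eq_real_def zero_complex.simps)
  moreover have "Re (\<rho> c c) \<le> (\<Sum>h\<in>configs d Z. Re (\<rho> (override_on c h Z) (override_on c h Z)))"
  proof -
    have "override_on c (restr c Z) Z = c"
      by (auto simp: override_on_def restr_def)
    then show ?thesis
      using diag finite_configs[OF finite_subset[OF assms(4,3)]] restr_in_configs[OF assms(5,4)]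
        member_le_sum[of "restr c Z" "configs d Z" "\<lambda>h. Re (\<rho> (override_on c h Z) (override_on c h Z))"]
      by simp
  qed
  ultimately show "0 < Re (trace d Z (slice d \<rho> c Z))"
    unfolding trace_eq by (simp add: Re_sum)
qed

lemma slice_normalized_in_dens:
  assumes "\<rho> c c \<noteq> 0" "\<rho> \<in> dens d L" "finite L" "Z \<subseteq> L" "c \<in> configs d L"
  shows "(\<lambda>h h'. slice d \<rho> c Z h h' / trace d Z (slice d \<rho> c Z)) \<in> dens d Z"
    (is "?\<beta> \<in> _")
proof -
  let ?S = "slice d \<rho> c Z"
  define r where "r = Re (trace d Z ?S)"
  have t_real: "trace d Z ?S = of_real r"
    unfolding r_def by (rule complex_eqI) (simp_all add: trace_slice_pos(1)[OF assms])
  have r_pos: "0 < r"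
    unfolding r_def by (rule trace_slice_pos(2)[OF assms])
  have quad: "quad_form d Z ?\<beta> v = quad_form d Z ?S v / of_real r" for v
    unfolding quad_form_def t_real by (simp add: sum_divide_distrib)
  show ?thesis
  proof (rule densI)
    fix v
    obtain w where w: "quad_form d Z ?S v = quad_form d L \<rho> w"
      using quad_form_slice[OF assms(3-5)] .
    show "Im (quad_form d Z ?\<beta> v) = 0" "0 \<le> Re (quad_form d Z ?\<beta> v)"
      unfolding quad w Im_divide_of_real Re_divide_of_real
      using densD(3,4)[OF assms(2)] r_pos by simp_all
  next
    have "trace d Z ?\<beta> = trace d Z ?S / trace d Z ?S"
      unfolding trace_def by (rule sum_divide_distrib[symmetric])
    then show "trace d Z ?\<beta> = 1"
      using r_pos t_real by simp
  next
    fix f g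
    have "?S f g = cnj (?S g f)"
      unfolding slice_def by (auto intro: densD(2)[OF assms(2)])
    then show "?\<beta> f g = cnj (?\<beta> g f)"
      by (simp add: t_real)
  next
    fix f g
    assume "f \<notin> configs d Z \<or> g \<notin> configs d Z"
    then show "?\<beta> f g = 0" by (auto simp: slice_def)
  qed
qed

section \<open>Products along a partition\<close>

lemma tensor_apply:
  "f \<in> configs d L \<Longrightarrow> g \<in> configs d L \<Longrightarrow> tensor d L Q \<rho>s f g = (\<Prod>X\<in>Q. \<rho>s X (restr f X) (restr g X))"
  by (simp add: tensor_def)

lemma partition_on_subset: "partition_on L Q \<Longrightarrow> Z \<in> Q \<Longrightarrow> Z \<subseteq> L"
  by (auto simp: partition_on_def)

lemma partition_on_disjointD: "partition_on L Q \<Longrightarrow> X \<in> Q \<Longrightarrow> Z \<in> Q \<Longrightarrow> X \<noteq> Z \<Longrightarrow> X \<inter> Z = {}"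
  by (auto simp: partition_on_def dest: disjointD)

lemma trace_tensor:
  assumes "finite L" "partition_on L Q"
  shows "trace d L (tensor d L Q \<rho>s) = (\<Prod>Z\<in>Q. trace d Z (\<rho>s Z))"
proof -
  have "trace d L (tensor d L Q \<rho>s) = (\<Sum>f\<in>configs d (\<Union>Q). \<Prod>Z\<in>Q. \<rho>s Z (restr f Z) (restr f Z))"
    using partition_onD1[OF assms(2)] by (simp add: trace_def tensor_def)
  also have "\<dots> = (\<Prod>Z\<in>Q. trace d Z (\<rho>s Z))"
    unfolding trace_def
    by (rule sum_configs_Union_prod[OF finite_elements[OF assms] partition_onD2[OF assms(2)]])
  finally show ?thesis .
qed

text \<open>The factors are the slices of \<open>\<rho>\<close> through \<open>c\<close>, normalized to unit trace.\<close>
lemma unc_if_factorizes_through_slices: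
  assumes p0: "\<rho> c c \<noteq> 0" and rho: "\<rho> \<in> dens d L" and fin: "finite L"
    and part: "partition_on L Q" and c: "c \<in> configs d L"
    and factorizes: "\<And>f g. f \<in> configs d L \<Longrightarrow> g \<in> configs d L \<Longrightarrow>
      \<rho> f g * \<rho> c c ^ card Q = \<rho> c c * (\<Prod>Z\<in>Q. \<rho> (override_on c f Z) (override_on c g Z))"
  shows "\<rho> \<in> unc d L Q"
proof -
  define \<beta> where "\<beta> Z = (\<lambda>h h'. slice d \<rho> c Z h h' / trace d Z (slice d \<rho> c Z))" for Z
  define T where "T = (\<Prod>Z\<in>Q. trace d Z (slice d \<rho> c Z))"
  define scale where "scale = \<rho> c c * T / \<rho> c c ^ card Q"
  have finQ: "finite Q" using finite_elements[OF fin part] .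
  have \<beta>_dens: "\<beta> Z \<in> dens d Z" if "Z \<in> Q" for Z
    unfolding \<beta>_def using slice_normalized_in_dens[OF p0 rho fin partition_on_subset[OF part that] c] .
  have "trace d Z (slice d \<rho> c Z) \<noteq> 0" if "Z \<in> Q" for Z
    using trace_slice_pos(2)[OF p0 rho fin partition_on_subset[OF part that] c] by auto
  then have T_nz: "T \<noteq> 0" unfolding T_def using finQ by simp
  have \<rho>_eq: "\<rho> f g = scale * tensor d L Q \<beta> f g" for f g
  proof (cases "f \<in> configs d L \<and> g \<in> configs d L")
    case True
    have "tensor d L Q \<beta> f g
        = (\<Prod>Z\<in>Q. \<rho> (override_on c f Z) (override_on c g Z) / trace d Z (slice d \<rho> c Z))"
      using True partition_on_subset[OF part]
      by (auto simp: tensor_apply \<beta>_def slice_def restr_in_configs override_on_restr intro!: prod.cong)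
    also have "\<dots> = (\<Prod>Z\<in>Q. \<rho> (override_on c f Z) (override_on c g Z)) / T"
      by (simp add: T_def prod_dividef)
    finally show ?thesis
      using factorizes[of f g] True T_nz p0 by (simp add: scale_def field_simps)
  next
    case False
    then show ?thesis using densD(1)[OF rho] by (auto simp: tensor_def)
  qed
  have "1 = trace d L \<rho>" using densD(5)[OF rho] by simp
  also have "\<dots> = scale * trace d L (tensor d L Q \<beta>)"
    by (simp add: trace_def \<rho>_eq sum_distrib_left)
  also have "\<dots> = scale"
    using densD(5)[OF \<beta>_dens] by (simp add: trace_tensor[OF fin part])
  finally have "\<rho> = tensor d L Q \<beta>" using \<rho>_eq by auto
  then show ?thesis unfolding unc_def using rho \<beta>_dens by blast
qed

text \<open>Each factor on the right differs from \<open>\<rho> c c\<close> in the block \<open>Z\<close> only, so multiplying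
  them over \<open>Z\<close> reassembles the left-hand side.\<close>
lemma tensor_override_on_factorizes:
  assumes \<rho>: "\<rho> = tensor d L Q \<rho>s" and part: "partition_on L Q" and fin: "finite L"
    and c: "c \<in> configs d L" and f: "f \<in> configs d L" and g: "g \<in> configs d L"
  shows "\<rho> (override_on c f A) (override_on c g A) * \<rho> c c ^ card Q
       = \<rho> c c * (\<Prod>Z\<in>Q. \<rho> (override_on c f (A \<inter> Z)) (override_on c g (A \<inter> Z)))"
proof -
  have finQ: "finite Q" using finite_elements[OF fin part] .
  define e where "e X = \<rho>s X (restr (override_on c f A) X) (restr (override_on c g A) X)" for X
  define q where "q X = \<rho>s X (restr c X) (restr c X)" for X
  have \<rho>_c: "\<rho> c c = (\<Prod>X\<in>Q. q X)" using \<rho> c by (simp add: tensor_apply q_def)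
  have \<rho>_A: "\<rho> (override_on c f A) (override_on c g A) = (\<Prod>X\<in>Q. e X)"
    using \<rho> override_on_in_configs[OF c f] override_on_in_configs[OF c g] by (simp add: tensor_apply e_def)
  have block: "q Z * \<rho> (override_on c f (A \<inter> Z)) (override_on c g (A \<inter> Z)) = e Z * \<rho> c c"
    if Z: "Z \<in> Q" for Z
  proof -
    have restr_eq: "restr (override_on c h (A \<inter> Z)) X
        = (if X = Z then restr (override_on c h A) X else restr c X)" if "X \<in> Q" for h X
      using partition_on_disjointD[OF part that Z]
      by (auto simp: restr_def override_on_def fun_eq_iff)
    have "\<rho> (override_on c f (A \<inter> Z)) (override_on c g (A \<inter> Z))
        = (\<Prod>X\<in>Q. \<rho>s X (restr (override_on c f (A \<inter> Z)) X) (restr (override_on c g (A \<inter> Z)) X))"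
      using \<rho> override_on_in_configs[OF c f] override_on_in_configs[OF c g] by (simp add: tensor_apply)
    also have "\<dots> = (\<Prod>X\<in>Q. if X = Z then e X else q X)"
      by (intro prod.cong refl) (simp add: restr_eq e_def q_def)
    also have "\<dots> = e Z * (\<Prod>X\<in>Q - {Z}. q X)"
      using prod.remove[OF finQ Z, of "\<lambda>X. if X = Z then e X else q X"] by simp
    finally show ?thesis
      using \<rho>_c prod.remove[OF finQ Z, of q] by (simp add: mult_ac)
  qed
  have "(\<Prod>Z\<in>Q. q Z) * (\<Prod>Z\<in>Q. \<rho> (override_on c f (A \<inter> Z)) (override_on c g (A \<inter> Z)))
      = (\<Prod>Z\<in>Q. e Z * \<rho> c c)"
    using block by (simp add: prod.distrib[symmetric])
  also have "\<dots> = (\<Prod>Z\<in>Q. e Z) * \<rho> c c ^ card Q"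
    by (simp add: prod.distrib)
  finally show ?thesis using \<rho>_c \<rho>_A by (simp add: mult_ac)
qed

lemma tensor_diag_swap:
  assumes \<rho>: "\<rho> = tensor d L R \<sigma>s" and part: "partition_on L R" and Y: "Y \<in> R"
    and c: "c \<in> configs d L" and f: "f \<in> configs d L"
  shows "\<rho> (override_on c f Y) (override_on c f Y) * \<rho> (override_on f c Y) (override_on f c Y)
       = \<rho> f f * \<rho> c c"
proof -
  have restr_swap: "restr (override_on a b Y) Y' = (if Y' = Y then restr b Y' else restr a Y')"
    if "Y' \<in> R" for a b Y'
    using partition_on_disjointD[OF part that Y]
    by (auto simp: restr_override_on_subset restr_override_on_disjoint)
  have in_configs: "override_on c f Y \<in> configs d L" "override_on f c Y \<in> configs d L"
    using override_on_in_configs c f by blast+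
  have "\<rho> (override_on c f Y) (override_on c f Y) * \<rho> (override_on f c Y) (override_on f c Y)
      = (\<Prod>Y'\<in>R. \<sigma>s Y' (restr (override_on c f Y) Y') (restr (override_on c f Y) Y')
                 * \<sigma>s Y' (restr (override_on f c Y) Y') (restr (override_on f c Y) Y'))"
    using in_configs by (simp add: \<rho> tensor_apply prod.distrib)
  also have "\<dots> = (\<Prod>Y'\<in>R. \<sigma>s Y' (restr f Y') (restr f Y') * \<sigma>s Y' (restr c Y') (restr c Y'))"
    by (intro prod.cong refl) (simp add: restr_swap)
  also have "\<dots> = \<rho> f f * \<rho> c c"
    using c f by (simp add: \<rho> tensor_apply prod.distrib)
  finally show ?thesis .
qed

section \<open>Meets of partitions\<close>

definition meet :: "'a set set \<Rightarrow> 'a set set \<Rightarrow> 'a set set" where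
  "meet Q R = {X \<inter> Y | X Y. X \<in> Q \<and> Y \<in> R \<and> X \<inter> Y \<noteq> {}}"

lemma partition_on_meet:
  assumes "partition_on L Q" "partition_on L R"
  shows "partition_on L (meet Q R)"
proof (rule partition_onI)
  show "\<Union>(meet Q R) = L"
    using partition_onD1[OF assms(1)] partition_onD1[OF assms(2)] unfolding meet_def by blast
next
  fix A B assume "A \<in> meet Q R" "B \<in> meet Q R" "A \<noteq> B"
  then obtain X Y X' Y' where A: "A = X \<inter> Y" and B: "B = X' \<inter> Y'"
    and in_parts: "X \<in> Q" "X' \<in> Q" "Y \<in> R" "Y' \<in> R" and "X \<noteq> X' \<or> Y \<noteq> Y'"
    unfolding meet_def by blast
  then have "X \<inter> X' = {} \<or> Y \<inter> Y' = {}"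
    using partition_on_disjointD[OF assms(1)] partition_on_disjointD[OF assms(2)] by blast
  then show "disjnt A B"
    unfolding A B disjnt_def by blast
qed (auto simp: meet_def)

lemma refines_refl: "refines Q Q"
  by (auto simp: refines_def)

lemma refines_trans: "refines Q R \<Longrightarrow> refines R S \<Longrightarrow> refines Q S"
  unfolding refines_def by (meson order_trans)

lemma refines_meet: "refines (meet Q R) Q" "refines (meet Q R) R"
  unfolding refines_def meet_def by auto

lemma bij_betw_Int_meet:
  assumes "disjoint Q" "disjoint R"
  shows "bij_betw (\<lambda>(X, Y). X \<inter> Y) {(X, Y) \<in> Q \<times> R. X \<inter> Y \<noteq> {}} (meet Q R)"
proof (rule bij_betw_imageI)
  show "inj_on (\<lambda>(X, Y). X \<inter> Y) {(X, Y) \<in> Q \<times> R. X \<inter> Y \<noteq> {}}"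
  proof (rule inj_onI, clarify)
    fix X Y X' Y'
    assume "X \<in> Q" "Y \<in> R" "X' \<in> Q" "Y' \<in> R" "X \<inter> Y \<noteq> {}" "X \<inter> Y = X' \<inter> Y'"
    then have "X \<inter> X' \<noteq> {}" "Y \<inter> Y' \<noteq> {}" by auto
    then show "X = X' \<and> Y = Y'"
      using assms \<open>X \<in> Q\<close> \<open>Y \<in> R\<close> \<open>X' \<in> Q\<close> \<open>Y' \<in> R\<close> by (auto dest: disjointD)
  qed
qed (auto simp: meet_def)

lemma card_meet:
  assumes "finite Q" "finite R" "disjoint Q" "disjoint R"
  shows "card Q * card R = card (meet Q R) + card {(X, Y) \<in> Q \<times> R. X \<inter> Y = {}}"
proof -
  let ?E = "{(X, Y) \<in> Q \<times> R. X \<inter> Y \<noteq> {}}" and ?N = "{(X, Y) \<in> Q \<times> R. X \<inter> Y = {}}"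
  have "finite ?E" "finite ?N" using assms(1,2) by (auto intro: finite_subset[of _ "Q \<times> R"])
  then have "card (?E \<union> ?N) = card ?E + card ?N"
    by (intro card_Un_disjoint) auto
  also have "?E \<union> ?N = Q \<times> R" by auto
  also have "card ?E = card (meet Q R)"
    using bij_betw_same_card[OF bij_betw_Int_meet[OF assms(3,4)]] .
  finally show ?thesis by (simp add: card_cartesian_product)
qed

lemma prod_Int_meet:
  fixes D :: "'a set \<Rightarrow> 'b::comm_monoid_mult"
  assumes "finite Q" "finite R" "disjoint Q" "disjoint R"
  shows "(\<Prod>X\<in>Q. \<Prod>Y\<in>R. D (X \<inter> Y))
       = (\<Prod>Z\<in>meet Q R. D Z) * D {} ^ card {(X, Y) \<in> Q \<times> R. X \<inter> Y = {}}"
proof -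
  let ?E = "{(X, Y) \<in> Q \<times> R. X \<inter> Y \<noteq> {}}" and ?N = "{(X, Y) \<in> Q \<times> R. X \<inter> Y = {}}"
  have fin: "finite ?E" "finite ?N" using assms(1,2) by (auto intro: finite_subset[of _ "Q \<times> R"])
  have "(\<Prod>X\<in>Q. \<Prod>Y\<in>R. D (X \<inter> Y)) = (\<Prod>(X, Y)\<in>?E \<union> ?N. D (X \<inter> Y))"
    by (simp add: prod.cartesian_product) (rule prod.cong; auto)
  also have "\<dots> = (\<Prod>(X, Y)\<in>?E. D (X \<inter> Y)) * (\<Prod>(X, Y)\<in>?N. D (X \<inter> Y))"
    using fin by (intro prod.union_disjoint) auto
  also have "(\<Prod>(X, Y)\<in>?N. D (X \<inter> Y)) = D {} ^ card ?N"
    by (subst prod.cong[OF refl, where h = "\<lambda>_. D {}"]) auto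
  also have "(\<Prod>(X, Y)\<in>?E. D (X \<inter> Y)) = (\<Prod>Z\<in>meet Q R. D Z)"
    using prod.reindex_bij_betw[OF bij_betw_Int_meet[OF assms(3,4)], of D]
    by (simp add: case_prod_unfold)
  finally show ?thesis .
qed

lemma power_card_mult_factorization:
  fixes D :: "'a set \<Rightarrow> 'b::idom"
  assumes "p \<noteq> 0" "D L * p ^ card Q = p * (\<Prod>X\<in>Q. D X)"
    and "\<And>X. D X * p ^ card R = p * (\<Prod>Y\<in>R. D (X \<inter> Y))"
  shows "D L * p ^ (card Q * card R) = p * (\<Prod>X\<in>Q. \<Prod>Y\<in>R. D (X \<inter> Y))"
proof -
  have "p ^ (card Q * card R) = (\<Prod>X\<in>Q. p ^ card R)"
    by (simp add: power_mult[symmetric] mult.commute)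
  then have "D L * p ^ (card Q * card R) * p ^ card Q = (D L * p ^ card Q) * (\<Prod>X\<in>Q. p ^ card R)"
    by (simp only: mult_ac)
  also have "\<dots> = p * (\<Prod>X\<in>Q. D X * p ^ card R)"
    by (simp only: assms(2) prod.distrib mult.assoc)
  also have "\<dots> = p * p ^ card Q * (\<Prod>X\<in>Q. \<Prod>Y\<in>R. D (X \<inter> Y))"
    by (simp add: assms(3) prod.distrib)
  finally show ?thesis using assms(1) by simp
qed

lemma unc_meet:
  assumes fin: "finite L" and pQ: "partition_on L Q" and pR: "partition_on L R"
    and uQ: "\<rho> \<in> unc d L Q" and uR: "\<rho> \<in> unc d L R"
  shows "\<rho> \<in> unc d L (meet Q R)"
proof -
  obtain \<rho>s \<sigma>s where rho: "\<rho> \<in> dens d L"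
    and \<rho>Q: "\<rho> = tensor d L Q \<rho>s" and \<rho>R: "\<rho> = tensor d L R \<sigma>s"
    using uQ uR unfolding unc_def by blast
  obtain c where c: "c \<in> configs d L" and p0: "\<rho> c c \<noteq> 0"
    using dens_diag_nonzero[OF rho] .
  have finQR: "finite Q" "finite R"
    using finite_elements[OF fin pQ] finite_elements[OF fin pR] .
  have disjQR: "disjoint Q" "disjoint R"
    using partition_onD2[OF pQ] partition_onD2[OF pR] .
  show ?thesis
  proof (rule unc_if_factorizes_through_slices[OF p0 rho fin partition_on_meet[OF pQ pR] c])
    fix f g assume f: "f \<in> configs d L" and g: "g \<in> configs d L"
    define D where "D A = \<rho> (override_on c f A) (override_on c g A)" for A
    define p where "p = \<rho> c c"
    define N where "N = card {(X, Y) \<in> Q \<times> R. X \<inter> Y = {}}"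
    have "D L * p ^ card Q = p * (\<Prod>X\<in>Q. D (L \<inter> X))"
      using tensor_override_on_factorizes[OF \<rho>Q pQ fin c f g] by (simp add: D_def p_def)
    also have "(\<Prod>X\<in>Q. D (L \<inter> X)) = (\<Prod>X\<in>Q. D X)"
      using partition_on_subset[OF pQ] by (intro prod.cong refl) (simp add: Int_absorb1)
    finally have split_Q: "D L * p ^ card Q = p * (\<Prod>X\<in>Q. D X)" .
    have split_R: "D X * p ^ card R = p * (\<Prod>Y\<in>R. D (X \<inter> Y))" for X
      using tensor_override_on_factorizes[OF \<rho>R pR fin c f g] by (simp add: D_def p_def)
    have "D L * p ^ (card Q * card R) = p * (\<Prod>X\<in>Q. \<Prod>Y\<in>R. D (X \<inter> Y))"
      using power_card_mult_factorization[of p D L Q R] p0 split_Q split_R by (simp add: p_def)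
    then have "D L * p ^ card (meet Q R) * p ^ N = p * (\<Prod>Z\<in>meet Q R. D Z) * p ^ N"
      using prod_Int_meet[OF finQR disjQR, of D] card_meet[OF finQR disjQR]
      by (simp add: D_def p_def N_def power_add mult_ac)
    then show "\<rho> f g * \<rho> c c ^ card (meet Q R)
        = \<rho> c c * (\<Prod>Z\<in>meet Q R. \<rho> (override_on c f Z) (override_on c g Z))"
      using p0 override_on_configs_eq[OF c f] override_on_configs_eq[OF c g]
      by (simp add: D_def p_def)
  qed
qed

section \<open>Products of GHZ states\<close>

definition ones :: "nat set \<Rightarrow> nat \<Rightarrow> nat" where
  "ones X = (\<lambda>i. if i \<in> X then 1 else 0)"

definition ghz :: "nat set \<Rightarrow> (nat \<Rightarrow> nat) \<Rightarrow> real" where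
  "ghz X h = (if h = (\<lambda>_. 0) \<or> h = ones X then 1 / sqrt 2 else 0)"

definition ghz_product :: "(nat \<Rightarrow> nat) \<Rightarrow> nat set \<Rightarrow> nat set set \<Rightarrow> (nat \<Rightarrow> nat) \<Rightarrow> real" where
  "ghz_product d L Q f = (if f \<in> configs d L then \<Prod>X\<in>Q. ghz X (restr f X) else 0)"

lemma restr_ones: "restr (ones X) Y = ones (X \<inter> Y)"
  by (auto simp: ones_def restr_def)

lemma ones_in_configs: "X \<subseteq> L \<Longrightarrow> \<forall>i\<in>L. 1 < d i \<Longrightarrow> ones X \<in> configs d L"
  by (auto simp: ones_def configs_def)

lemma zero_in_configs: "\<forall>i\<in>L. 1 < d i \<Longrightarrow> (\<lambda>_. 0) \<in> configs d L"
  by (auto simp: configs_def)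

lemma sum_ghz_squared:
  assumes "finite X" "X \<noteq> {}" "\<forall>i\<in>X. 1 < d i"
  shows "(\<Sum>h\<in>configs d X. (ghz X h)\<^sup>2) = 1"
proof -
  have zero_ones: "(\<lambda>_. 0) \<noteq> ones X"
    using assms(2) by (auto simp: ones_def fun_eq_iff)
  have "{h \<in> configs d X. h = (\<lambda>_. 0) \<or> h = ones X} = {\<lambda>_. 0, ones X}"
    using zero_in_configs[OF assms(3)] ones_in_configs[OF subset_refl assms(3)] by auto
  then have "(\<Sum>h\<in>configs d X. (ghz X h)\<^sup>2) = (\<Sum>h\<in>{\<lambda>_. 0, ones X}. (1 / sqrt 2)\<^sup>2)"
    using finite_configs[OF assms(1)]
    by (simp add: ghz_def if_distrib[of "\<lambda>x. x\<^sup>2"] sum.inter_filter[symmetric] cong: if_cong)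
  then show ?thesis using zero_ones by (simp add: power_divide)
qed

lemma ghz_product_unc:
  assumes fin: "finite L" and d: "\<forall>i\<in>L. 1 < d i" and part: "partition_on L Q"
  shows "(\<lambda>f g. complex_of_real (ghz_product d L Q f * ghz_product d L Q g)) \<in> unc d L Q"
proof -
  have block: "finite X" "X \<noteq> {}" "\<forall>i\<in>X. 1 < d i" if "X \<in> Q" for X
    using partition_on_subset[OF part that] partition_onD3[OF part] fin d that
    by (auto intro: finite_subset)
  define v where "v X h = (if h \<in> configs d X then ghz X h else 0)" for X h
  define \<rho>s where "\<rho>s X = (\<lambda>h h'. complex_of_real (v X h * v X h'))" for X
  have \<rho>s_dens: "\<rho>s X \<in> dens d X" if "X \<in> Q" for X
    unfolding \<rho>s_def using sum_ghz_squared[OF block[OF that]]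
    by (intro rank_one_in_dens) (simp_all add: v_def)
  have "(\<Sum>f\<in>configs d L. (ghz_product d L Q f)\<^sup>2)
      = (\<Sum>f\<in>configs d (\<Union>Q). \<Prod>X\<in>Q. (ghz X (restr f X))\<^sup>2)"
    by (simp add: ghz_product_def partition_onD1[OF part, symmetric] prod_power_distrib)
  also have "\<dots> = (\<Prod>X\<in>Q. \<Sum>h\<in>configs d X. (ghz X h)\<^sup>2)"
    by (rule sum_configs_Union_prod[OF finite_elements[OF fin part] partition_onD2[OF part]])
  also have "\<dots> = 1"
    using sum_ghz_squared block by simp
  finally have dens: "(\<lambda>f g. complex_of_real (ghz_product d L Q f * ghz_product d L Q g)) \<in> dens d L"
    by (intro rank_one_in_dens) (simp_all add: ghz_product_def)
  have "(\<lambda>f g. complex_of_real (ghz_product d L Q f * ghz_product d L Q g)) = tensor d L Q \<rho>s"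
  proof (intro ext)
    fix f g
    show "complex_of_real (ghz_product d L Q f * ghz_product d L Q g) = tensor d L Q \<rho>s f g"
    proof (cases "f \<in> configs d L \<and> g \<in> configs d L")
      case True
      then have "\<forall>X\<in>Q. restr f X \<in> configs d X \<and> restr g X \<in> configs d X"
        using restr_in_configs partition_on_subset[OF part] by blast
      with True show ?thesis
        by (simp add: \<rho>s_def tensor_apply ghz_product_def v_def prod.distrib flip: of_real_prod
            cong: prod.cong)
    qed (auto simp: ghz_product_def tensor_def)
  qed
  then show ?thesis using dens \<rho>s_dens unfolding unc_def by auto
qed

lemma ghz_product_ones_nonzero:
  assumes fin: "finite L" and d: "\<forall>i\<in>L. 1 < d i" and part: "partition_on L Q" and X: "X \<in> Q"
  shows "ghz_product d L Q (ones X) \<noteq> 0"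
proof -
  have "ghz X' (restr (ones X) X') \<noteq> 0" if "X' \<in> Q" for X'
  proof (cases "X' = X")
    case False
    then have "restr (ones X) X' = (\<lambda>_. 0)"
      using partition_on_disjointD[OF part X that] by (auto simp: restr_def ones_def fun_eq_iff)
    then show ?thesis by (simp add: ghz_def)
  qed (simp add: ghz_def restr_ones)
  then show ?thesis
    using ones_in_configs[OF partition_on_subset[OF part X] d] finite_elements[OF fin part]
    by (simp add: ghz_product_def)
qed

text \<open>A GHZ vector on a block \<open>X\<close> does not split across a cut \<open>X \<inter> Y\<close>: swapping \<open>|1\<dots>1\<rangle>\<close>
  and \<open>|0\<dots>0\<rangle>\<close> on \<open>Y\<close> only creates a basis vector of amplitude zero.\<close>
lemma ghz_product_unc_refines:
  assumes fin: "finite L" and d: "\<forall>i\<in>L. 1 < d i" and part: "partition_on L Q"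
    and partR: "partition_on L R"
    and unc: "(\<lambda>f g. complex_of_real (ghz_product d L Q f * ghz_product d L Q g)) \<in> unc d L R"
  shows "refines Q R"
proof (rule ccontr)
  let ?u = "ghz_product d L Q" and ?z = "\<lambda>_. 0 :: nat"
  assume "\<not> refines Q R"
  then obtain X where X: "X \<in> Q" and not_sub: "\<forall>Y\<in>R. \<not> X \<subseteq> Y"
    unfolding refines_def by blast
  have X_sub: "X \<subseteq> L" using partition_on_subset[OF part X] .
  have "X \<noteq> {}" using partition_onD3[OF part] X by auto
  then obtain i where i: "i \<in> X" by blast
  then obtain Y where Y: "Y \<in> R" "i \<in> Y"
    using X_sub partition_onD1[OF partR] by blast
  then obtain j where j: "j \<in> X" "j \<notin> Y" using not_sub by blast
  obtain \<sigma>s where \<rho>R: "(\<lambda>f g. complex_of_real (?u f * ?u g)) = tensor d L R \<sigma>s"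
    using unc unfolding unc_def by blast
  have zL: "?z \<in> configs d L" and oL: "ones X \<in> configs d L"
    using zero_in_configs[OF d] ones_in_configs[OF X_sub d] .
  have "?u (ones X) \<noteq> 0"
    using ghz_product_ones_nonzero[OF fin d part X] .
  moreover have "?u ?z \<noteq> 0"
    using zL finite_elements[OF fin part] by (simp add: ghz_product_def restr_def ghz_def)
  moreover have "?u (override_on ?z (ones X) Y) = 0"
  proof -
    have "restr (override_on ?z (ones X) Y) X = ones (X \<inter> Y)"
      by (auto simp: restr_def override_on_def ones_def)
    moreover have "ones (X \<inter> Y) \<noteq> ?z" "ones (X \<inter> Y) \<noteq> ones X"
      using i Y(2) j by (auto simp: ones_def fun_eq_iff)
    ultimately have "ghz X (restr (override_on ?z (ones X) Y) X) = 0" by (simp add: ghz_def)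
    then show ?thesis
      using X finite_elements[OF fin part] by (auto simp: ghz_product_def)
  qed
  ultimately show False
    using tensor_diag_swap[OF \<rho>R partR Y(1) zL oL] by simp
qed

section \<open>The finest product decomposition of a state\<close>

lemma meet_closed_lower_bound:
  assumes "finite F" "F \<noteq> {}" "F \<subseteq> U" "\<And>a b. a \<in> U \<Longrightarrow> b \<in> U \<Longrightarrow> meet a b \<in> U"
  shows "\<exists>m\<in>U. \<forall>\<eta>\<in>F. refines m \<eta>"
  using assms
proof (induction F rule: finite_ne_induct)
  case (singleton x)
  then show ?case using refines_refl by blast
next
  case (insert x F)
  then obtain m where m: "m \<in> U" "\<forall>\<eta>\<in>F. refines m \<eta>" by blast
  have "meet m x \<in> U" using insert.prems m(1) by simp
  moreover have "refines (meet m x) \<eta>" if "\<eta> \<in> insert x F" for \<eta>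
    using that m(2) refines_meet refines_trans by blast
  ultimately show ?case by blast
qed

lemma least_unc_partition:
  assumes fin: "finite L" and \<eta>: "\<eta> \<in> PI L" "\<rho> \<in> unc d L \<eta>"
  obtains m where "m \<in> PI L" "\<rho> \<in> unc d L m" "\<And>\<eta>'. \<eta>' \<in> PI L \<Longrightarrow> \<rho> \<in> unc d L \<eta>' \<Longrightarrow> refines m \<eta>'"
proof -
  define U where "U = {\<eta> \<in> PI L. \<rho> \<in> unc d L \<eta>}"
  have "U \<subseteq> Pow (Pow L)"
    by (auto simp: U_def PI_def dest: partition_on_subset)
  then have "finite U" using fin by (auto intro: finite_subset)
  moreover have "U \<noteq> {}" using \<eta> by (auto simp: U_def)
  moreover have "meet a b \<in> U" if "a \<in> U" "b \<in> U" for a b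
    using that unc_meet[OF fin] partition_on_meet by (auto simp: U_def PI_def)
  ultimately obtain m where "m \<in> U" "\<forall>\<eta>\<in>U. refines m \<eta>"
    using meet_closed_lower_bound[of U U] by blast
  then show thesis using that by (auto simp: U_def)
qed

lemma upset_downset_iff:
  assumes "\<xi> \<in> PI L"
  shows "S \<in> upset L (downset L \<xi>) \<longleftrightarrow> S \<in> PII L \<and> \<xi> \<in> S"
proof
  assume "S \<in> upset L (downset L \<xi>)"
  then show "S \<in> PII L \<and> \<xi> \<in> S"
    using assms refines_refl by (auto simp: upset_def downset_def)
next
  assume S: "S \<in> PII L \<and> \<xi> \<in> S"
  then have "downset L \<xi> \<subseteq> S"
    unfolding downset_def PII_def by blast
  then show "S \<in> upset L (downset L \<xi>)"
    using S by (simp add: upset_def)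
qed

lemma uncS_iff_least:
  assumes m: "m \<in> PI L" "\<rho> \<in> unc d L m"
    and least: "\<And>\<eta>. \<eta> \<in> PI L \<Longrightarrow> \<rho> \<in> unc d L \<eta> \<Longrightarrow> refines m \<eta>"
    and S: "S \<in> PII L"
  shows "\<rho> \<in> uncS d L S \<longleftrightarrow> S \<in> upset L (downset L m)"
proof -
  have "\<rho> \<in> uncS d L S \<longleftrightarrow> m \<in> S"
  proof
    assume "\<rho> \<in> uncS d L S"
    then obtain \<eta> where \<eta>: "\<eta> \<in> S" "\<rho> \<in> unc d L \<eta>" by (auto simp: uncS_def)
    moreover have "\<eta> \<in> PI L" using S \<eta>(1) by (auto simp: PII_def)
    ultimately show "m \<in> S"
      using S m(1) least unfolding PII_def by blast
  qed (use m(2) in \<open>auto simp: uncS_def\<close>)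
  then show ?thesis using upset_downset_iff[OF m(1)] S by blast
qed

lemma Cunc_iff:
  assumes "\<Xi> \<subseteq> PII L" "\<Xi> \<noteq> {}"
  shows "\<rho> \<in> Cunc d L \<Xi> \<longleftrightarrow> (\<forall>S\<in>PII L. S \<in> \<Xi> \<longleftrightarrow> \<rho> \<in> uncS d L S)"
proof
  assume "\<rho> \<in> Cunc d L \<Xi>"
  then show "\<forall>S\<in>PII L. S \<in> \<Xi> \<longleftrightarrow> \<rho> \<in> uncS d L S"
    unfolding Cunc_def by blast
next
  assume \<rho>: "\<forall>S\<in>PII L. S \<in> \<Xi> \<longleftrightarrow> \<rho> \<in> uncS d L S"
  obtain S0 where "S0 \<in> \<Xi>" using assms(2) by blast
  then have "\<rho> \<in> dens d L"
    using \<rho> assms(1) by (auto simp: uncS_def unc_def)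
  then show "\<rho> \<in> Cunc d L \<Xi>"
    using \<rho> assms(1) unfolding Cunc_def by blast
qed

lemma Cunc_upset_downset:
  assumes fin: "finite L" and \<Xi>: "\<Xi> \<subseteq> PII L" "\<Xi> \<noteq> {}" and \<rho>_in: "\<rho> \<in> Cunc d L \<Xi>"
  shows "\<exists>\<xi>\<in>PI L. \<Xi> = upset L (downset L \<xi>)"
proof -
  have \<rho>: "S \<in> \<Xi> \<longleftrightarrow> \<rho> \<in> uncS d L S" if "S \<in> PII L" for S
    using Cunc_iff[OF \<Xi>] \<rho>_in that by blast
  obtain S0 where S0: "S0 \<in> \<Xi>" using \<Xi>(2) by blast
  then have "\<rho> \<in> uncS d L S0" using \<rho> \<Xi>(1) by blast
  then obtain \<eta> where "\<eta> \<in> S0" "\<rho> \<in> unc d L \<eta>" by (auto simp: uncS_def)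
  moreover have "S0 \<subseteq> PI L" using S0 \<Xi>(1) by (auto simp: PII_def)
  ultimately obtain m where m: "m \<in> PI L" "\<rho> \<in> unc d L m"
    and least: "\<And>\<eta>. \<eta> \<in> PI L \<Longrightarrow> \<rho> \<in> unc d L \<eta> \<Longrightarrow> refines m \<eta>"
    using least_unc_partition[OF fin] by blast
  have "\<Xi> = upset L (downset L m)"
    using \<rho> uncS_iff_least[OF m least] \<Xi>(1) by (auto simp: upset_def)
  then show ?thesis using m(1) by blast
qed

lemma ghz_product_in_Cunc:
  assumes fin: "finite L" and d: "\<forall>i\<in>L. 1 < d i" and \<xi>: "\<xi> \<in> PI L"
  shows "(\<lambda>f g. complex_of_real (ghz_product d L \<xi> f * ghz_product d L \<xi> g))
      \<in> Cunc d L (upset L (downset L \<xi>))" (is "?\<rho> \<in> _")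
proof -
  have "PI L \<in> upset L (downset L \<xi>)"
    using \<xi> by (auto simp: upset_downset_iff PII_def)
  then have \<Xi>: "upset L (downset L \<xi>) \<subseteq> PII L" "upset L (downset L \<xi>) \<noteq> {}"
    by (auto simp: upset_def)
  have "?\<rho> \<in> unc d L \<xi>"
    using ghz_product_unc[OF fin d] \<xi> by (simp add: PI_def)
  moreover have "refines \<xi> \<eta>" if "\<eta> \<in> PI L" "?\<rho> \<in> unc d L \<eta>" for \<eta>
    using ghz_product_unc_refines[OF fin d] \<xi> that by (simp add: PI_def)
  ultimately have "S \<in> upset L (downset L \<xi>) \<longleftrightarrow> ?\<rho> \<in> uncS d L S" if "S \<in> PII L" for S
    using uncS_iff_least[OF \<xi>, of ?\<rho> d S] that by blast
  then show ?thesis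
    by (intro Cunc_iff[OF \<Xi>, THEN iffD2] ballI)
qed

theorem proposition3:
  fixes n :: nat and d :: "nat \<Rightarrow> nat" and \<Xi> :: "nat set set set set"
  assumes "n \<ge> 1"
    and "\<forall>i\<in>{1..n}. 1 < d i"
    and "\<Xi> \<in> PIII {1..n}"
  shows "Cunc d {1..n} \<Xi> \<noteq> {} \<longleftrightarrow> (\<exists>\<xi>\<in>PI {1..n}. \<Xi> = upset {1..n} (downset {1..n} \<xi>))"
proof
  have \<Xi>: "\<Xi> \<subseteq> PII {1..n}" "\<Xi> \<noteq> {}" using assms(3) by (auto simp: PIII_def)
  assume "Cunc d {1..n} \<Xi> \<noteq> {}"
  then obtain \<rho> where "\<rho> \<in> Cunc d {1..n} \<Xi>" by blast
  then show "\<exists>\<xi>\<in>PI {1..n}. \<Xi> = upset {1..n} (downset {1..n} \<xi>)"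
    using Cunc_upset_downset[OF finite_atLeastAtMost \<Xi>] by blast
next
  assume "\<exists>\<xi>\<in>PI {1..n}. \<Xi> = upset {1..n} (downset {1..n} \<xi>)"
  then show "Cunc d {1..n} \<Xi> \<noteq> {}"
    using ghz_product_in_Cunc[OF finite_atLeastAtMost assms(2)] by blast
qed

end
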